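(* Let $N\ge 1$ and $n\ge 1$ be integers, and let $x>1$ and $1\le y<2$ be real numbers. Let $\mathcal{S}_0,\dots,\mathcal{S}_{n-1}$ be nonempty sets of QPSK sequences of length $N$ such that, for every $0\le i\le n-1$: (a) $\mathrm{PEP}(\mathbf{s})\le x\,y^{2i}N$ for every $\mathbf{s}\in\mathcal{S}_i$; and (b) if $\mathbf{s}\in\mathcal{S}_i$ then $j^m\mathbf{s}\in\mathcal{S}_i$ for every $m\in\mathbb{Z}_4$. Let $\mathcal{A}$ be the set of all $2^{2n}$-QAM sequences $\mathbf{a}$ associated with tuples $(\mathbf{s}_0,\dots,\mathbf{s}_{n-1})$ with $\mathbf{s}_i\in\mathcal{S}_i$ for all $i$. Then $$\mathrm{PMEPR}(\mathcal{A})\le \frac{3}{4}\cdot\frac{2^{2n}}{2^{2n}-1}\cdot\left(\frac{1-(\frac{y}{2})^{n}}{1-\frac{y}{2}}\right)^2\cdot x.$$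
   Context: Let $j=\sqrt{-1}$. Fix $T>0$ and reals $f_0,\Delta f$ with $T\Delta f$ a positive integer; set $f_k=f_0+k\Delta f$. For a complex sequence $\mathbf{a}=(a_0,\dots,a_{N-1})$ define $S_{\mathbf{a}}(t)=\sum_{k=0}^{N-1}a_ke^{2\pi j f_k t}$, $P_{\mathbf{a}}(t)=|S_{\mathbf{a}}(t)|^2$, and $\mathrm{PEP}(\mathbf{a})=\sup_{t\in[0,T]}P_{\mathbf{a}}(t)$. A QPSK sequence of length $N$ is a sequence $\mathbf{s}=(s_0,\dots,s_{N-1})$ with every $s_k\in\{1,j,-1,-j\}$; $j^m\mathbf{s}=(j^ms_0,\dots,j^ms_{N-1})$. The $2^{2n}$-QAM sequence associated with QPSK sequences $\mathbf{s}_0,\dots,\mathbf{s}_{n-1}$, $\mathbf{s}_i=(s_{i,0},\dots,s_{i,N-1})$, is $\mathbf{a}=(a_0,\dots,a_{N-1})$ with $a_k=\frac{\sqrt2}{2}e^{\pi j/4}\sum_{i=0}^{n-1}2^{n-1-i}s_{i,k}$. The mean envelope power of $\mathcal{A}$ is $P_{av}(\mathcal{A})=\mathbb{E}\big[\frac1T\int_0^TP_{\mathbf{a}}(t)\,dt\big]=\mathbb{E}\|\mathbf{a}\|^2$, where the expectation is over $\mathbf{a}$ associated with $(\mathbf{s}_0,\dots,\mathbf{s}_{n-1})$ chosen uniformly at random from $\mathcal{S}_0\times\cdots\times\mathcal{S}_{n-1}$ (each $\mathbf{s}_i$ uniform in $\mathcal{S}_i$, independently). The peak-to-mean envelope power ratio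 is $\mathrm{PMEPR}(\mathcal{A})=\max_{\mathbf{a}\in\mathcal{A}}\mathrm{PEP}(\mathbf{a})/P_{av}(\mathcal{A})$. *)

theory Defs
  imports "HOL-Analysis.Analysis"
begin

definition env_signal :: "real \<Rightarrow> real \<Rightarrow> complex list \<Rightarrow> real \<Rightarrow> complex" where
  "env_signal f0 df a t =
     (\<Sum>k<length a. a ! k * exp (2 * of_real pi * \<i> * of_real ((f0 + real k * df) * t)))"

definition env_power :: "real \<Rightarrow> real \<Rightarrow> complex list \<Rightarrow> real \<Rightarrow> real" where
  "env_power f0 df a t = (cmod (env_signal f0 df a t))\<^sup>2"

definition PEP :: "real \<Rightarrow> real \<Rightarrow> real \<Rightarrow> complex list \<Rightarrow> real" where
  "PEP T f0 df a = (SUP t\<in>{0..T}. env_power f0 df a t)"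

definition qpsk_seq :: "nat \<Rightarrow> complex list \<Rightarrow> bool" where
  "qpsk_seq N s \<longleftrightarrow> length s = N \<and> set s \<subseteq> {1, \<i>, -1, -\<i>}"

definition rot_seq :: "nat \<Rightarrow> complex list \<Rightarrow> complex list" where
  "rot_seq m s = map (\<lambda>z. \<i> ^ m * z) s"

definition qam_seq :: "nat \<Rightarrow> nat \<Rightarrow> (nat \<Rightarrow> complex list) \<Rightarrow> complex list" where
  "qam_seq N n ss = map (\<lambda>k. (of_real (sqrt 2 / 2)) * exp (of_real pi * \<i> / 4) *
       (\<Sum>i<n. of_nat (2 ^ (n - 1 - i)) * (ss i ! k))) [0..<N]"

definition qam_set :: "nat \<Rightarrow> nat \<Rightarrow> (nat \<Rightarrow> complex list set) \<Rightarrow> complex list set" where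
  "qam_set N n S = {qam_seq N n ss | ss. \<forall>i<n. ss i \<in> S i}"

definition P_av :: "real \<Rightarrow> real \<Rightarrow> real \<Rightarrow> nat \<Rightarrow> nat \<Rightarrow> (nat \<Rightarrow> complex list set) \<Rightarrow> real" where
  "P_av T f0 df N n S =
     (\<Sum>ss\<in>PiE {..<n} S. (1 / T) * integral {0..T} (env_power f0 df (qam_seq N n ss)))
       / real (\<Prod>i<n. card (S i))"

definition PMEPR :: "real \<Rightarrow> real \<Rightarrow> real \<Rightarrow> nat \<Rightarrow> nat \<Rightarrow> (nat \<Rightarrow> complex list set) \<Rightarrow> real" where
  "PMEPR T f0 df N n S = Max (PEP T f0 df ` qam_set N n S) / P_av T f0 df N n S"

end

theory Submission
  imports Defs
begin

text \<open>The QAM signal is the linear combination \<open>c \<cdot> \<Sum>\<^sub>i 2^(n-1-i) S\<^sub>i\<close> of the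
QPSK signals with \<open>|c| = \<surd>2/2\<close>, so at every instant the triangle inequality and
\<open>|S\<^sub>i| \<le> y^i \<surd>(xN)\<close> bound its peak power by \<open>xN/2 \<cdot> (\<Sum>\<^sub>i 2^(n-1-i) y^i)\<^sup>2\<close>.
Since \<open>T \<Delta>f\<close> is a positive integer the subcarriers are orthogonal on \<open>[0,T]\<close>, so the
time-averaged power of a sequence is its energy \<open>\<Sum>\<^sub>k |a\<^sub>k|\<^sup>2\<close>. Averaging the energy over
the QAM sequences, the cross terms between different \<open>s\<^sub>i\<close> cancel because each \<open>S\<^sub>i\<close> is
closed under \<open>s \<mapsto> -s\<close>; what remains is \<open>N/2 \<cdot> \<Sum>\<^sub>i 4^(n-1-i) = N (4^n - 1)/6\<close>.
Summing the two geometric series gives the bound.\<close>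

lemma has_integral_exp_harmonic:
  fixes T df :: real and d :: int and m :: nat
  assumes T: "T > 0" and Tdf: "T * df = real m" and m: "m > 0"
  shows "((\<lambda>t. exp (2 * of_real pi * \<i> * of_real (real_of_int d * df * t))) has_integral
           (if d = 0 then of_real T else 0)) {0..T}"
proof (cases "d = 0")
  case True
  then show ?thesis
    using T has_integral_const_real[of "1::complex" 0 T] by (simp add: scaleR_conv_of_real)
next
  case False
  have "df > 0" using T Tdf m by (metis mult_pos_pos of_nat_0_less_iff zero_less_mult_pos)
  define c where "c = 2 * of_real pi * \<i> * of_real (real_of_int d * df)"
  have c0: "c \<noteq> 0" using False \<open>df > 0\<close> by (simp add: c_def)
  have "((\<lambda>t. exp (c * of_real t)) has_integral (exp (c * of_real T) / c - exp (c * of_real 0) / c)) {0..T}"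
  proof (rule fundamental_theorem_of_calculus)
    fix t assume "t \<in> {0..T}"
    have "((\<lambda>z. exp (c * z) / c) has_field_derivative exp (c * of_real t)) (at (of_real t))"
      using c0 by (auto intro!: derivative_eq_intros)
    then show "((\<lambda>t. exp (c * of_real t) / c) has_vector_derivative exp (c * of_real t)) (at t within {0..T})"
      by (rule has_vector_derivative_real_field)
  qed (use T in simp)
  moreover have "exp (c * of_real T) = 1"
  proof -
    have "complex_of_real T * complex_of_real df = of_nat m"
      by (metis Tdf of_real_mult of_real_of_nat_eq)
    then have "c * of_real T = 2 * of_int (d * int m) * pi * \<i>"
      unfolding c_def by (simp add: mult_ac)
    then show ?thesis using exp_integer_2pi[of "of_int (d * int m)"] by simp
  qed
  ultimately show ?thesis
    using False by (simp add: c_def mult_ac)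
qed

lemma exp_subcarrier_mult_cnj:
  "exp (2 * of_real pi * \<i> * of_real ((f0 + real k * df) * t)) *
   cnj (exp (2 * of_real pi * \<i> * of_real ((f0 + real l * df) * t)))
     = exp (2 * of_real pi * \<i> * of_real (real_of_int (int k - int l) * df * t))"
  by (simp add: exp_cnj exp_add[symmetric] algebra_simps)

lemma integral_env_power:
  fixes T df f0 :: real and m :: nat and a :: "complex list"
  assumes T: "T > 0" and Tdf: "T * df = real m" and m: "m > 0"
  shows "integral {0..T} (env_power f0 df a) = T * (\<Sum>k<length a. (cmod (a ! k))\<^sup>2)"
proof -
  let ?L = "length a"
  let ?G = "\<lambda>k l t. (a ! k * cnj (a ! l)) *
              exp (2 * of_real pi * \<i> * of_real (real_of_int (int k - int l) * df * t))"
  have expand: "complex_of_real (env_power f0 df a t) = (\<Sum>k<?L. \<Sum>l<?L. ?G k l t)" for t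
  proof -
    have "complex_of_real (env_power f0 df a t) = env_signal f0 df a t * cnj (env_signal f0 df a t)"
      unfolding env_power_def by (rule complex_norm_square)
    also have "\<dots> = (\<Sum>k<?L. \<Sum>l<?L. (a ! k * exp (2 * of_real pi * \<i> * of_real ((f0 + real k * df) * t))) *
         (cnj (a ! l) * cnj (exp (2 * of_real pi * \<i> * of_real ((f0 + real l * df) * t)))))"
      unfolding env_signal_def cnj_sum complex_cnj_mult sum_product by simp
    also have "\<dots> = (\<Sum>k<?L. \<Sum>l<?L. ?G k l t)"
      by (intro sum.cong refl, subst exp_subcarrier_mult_cnj[symmetric]) (simp only: mult_ac)
    finally show ?thesis .
  qed
  have diagonal: "(\<Sum>l<?L. (a ! k * cnj (a ! l)) * (if int k - int l = 0 then of_real T else 0))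
      = a ! k * cnj (a ! k) * of_real T" if "k < ?L" for k
  proof -
    have "(\<Sum>l<?L. (a ! k * cnj (a ! l)) * (if int k - int l = 0 then of_real T else 0))
        = (\<Sum>l<?L. if l = k then a ! k * cnj (a ! l) * of_real T else 0)"
      by (intro sum.cong refl) auto
    then show ?thesis using that by (simp add: sum.delta')
  qed
  have "((\<lambda>t. \<Sum>k<?L. \<Sum>l<?L. ?G k l t) has_integral
        (\<Sum>k<?L. \<Sum>l<?L. (a ! k * cnj (a ! l)) * (if int k - int l = 0 then of_real T else 0))) {0..T}"
    by (intro has_integral_sum finite_lessThan has_integral_mult_right has_integral_exp_harmonic[OF T Tdf m])
  also have "(\<Sum>k<?L. \<Sum>l<?L. (a ! k * cnj (a ! l)) * (if int k - int l = 0 then of_real T else 0))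
      = (\<Sum>k<?L. a ! k * cnj (a ! k) * of_real T)"
    by (intro sum.cong refl diagonal) simp
  also have "\<dots> = of_real (T * (\<Sum>k<?L. (cmod (a ! k))\<^sup>2))"
    by (simp add: complex_norm_square[symmetric] sum_distrib_left mult_ac)
  finally have "((\<lambda>t. complex_of_real (env_power f0 df a t)) has_integral
        of_real (T * (\<Sum>k<?L. (cmod (a ! k))\<^sup>2))) {0..T}"
    by (simp add: expand)
  from has_integral_Re[OF this] show ?thesis
    by (simp add: integral_unique)
qed

lemma norm_env_signal_le: "cmod (env_signal f0 df a t) \<le> (\<Sum>k<length a. cmod (a ! k))"
proof -
  have "cmod (env_signal f0 df a t)
      \<le> (\<Sum>k<length a. cmod (a ! k * exp (2 * of_real pi * \<i> * of_real ((f0 + real k * df) * t))))"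
    unfolding env_signal_def by (rule norm_sum)
  then show ?thesis by (simp add: norm_mult norm_exp_eq_Re)
qed

lemma env_power_le_PEP:
  assumes "t \<in> {0..T}"
  shows "env_power f0 df a t \<le> PEP T f0 df a"
  unfolding PEP_def
proof (rule cSUP_upper[OF assms])
  show "bdd_above (env_power f0 df a ` {0..T})"
    by (rule bdd_aboveI2[where M = "(\<Sum>k<length a. cmod (a ! k))\<^sup>2"])
       (simp add: env_power_def power_mono norm_env_signal_le)
qed

definition qam_scale :: complex where
  "qam_scale = of_real (sqrt 2 / 2) * exp (of_real pi * \<i> / 4)"

lemma norm_qam_scale: "cmod qam_scale = sqrt 2 / 2"
  unfolding qam_scale_def by (simp add: norm_mult norm_exp_eq_Re)

lemma length_qam_seq [simp]: "length (qam_seq N n ss) = N"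
  by (simp add: qam_seq_def)

lemma nth_qam_seq:
  "k < N \<Longrightarrow> qam_seq N n ss ! k = qam_scale * (\<Sum>i<n. of_nat (2 ^ (n - 1 - i)) * ss i ! k)"
  by (simp add: qam_seq_def qam_scale_def)

lemma env_signal_qam_seq:
  assumes "\<And>i. i < n \<Longrightarrow> length (ss i) = N"
  shows "env_signal f0 df (qam_seq N n ss) t
       = qam_scale * (\<Sum>i<n. of_nat (2 ^ (n - 1 - i)) * env_signal f0 df (ss i) t)"
proof -
  let ?e = "\<lambda>k. exp (2 * of_real pi * \<i> * of_real ((f0 + real k * df) * t))"
  have "env_signal f0 df (qam_seq N n ss) t
      = (\<Sum>k<N. qam_scale * (\<Sum>i<n. of_nat (2 ^ (n - 1 - i)) * ss i ! k) * ?e k)"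
    unfolding env_signal_def by (simp add: nth_qam_seq)
  also have "\<dots> = qam_scale * (\<Sum>i<n. of_nat (2 ^ (n - 1 - i)) * (\<Sum>k<N. ss i ! k * ?e k))"
    by (simp add: sum_distrib_left sum_distrib_right mult_ac sum.swap[of _ "{..<N}"])
  finally show ?thesis
    unfolding env_signal_def using assms by simp
qed

lemma PEP_qam_seq_le:
  fixes x y :: real
  assumes T: "T \<ge> 0" and x: "x \<ge> 0" and y: "y \<ge> 0"
    and len: "\<And>i. i < n \<Longrightarrow> length (ss i) = N"
    and pep: "\<And>i. i < n \<Longrightarrow> PEP T f0 df (ss i) \<le> x * y ^ (2 * i) * real N"
  shows "PEP T f0 df (qam_seq N n ss) \<le> 1/2 * x * N * (\<Sum>i<n. 2 ^ (n - 1 - i) * y ^ i)\<^sup>2"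
  unfolding PEP_def
proof (rule cSUP_least)
  fix t assume t: "t \<in> {0..T}"
  define R where "R = sqrt 2 / 2 * sqrt (x * N) * (\<Sum>i<n. 2 ^ (n - 1 - i) * y ^ i)"
  have component: "cmod (env_signal f0 df (ss i) t) \<le> y ^ i * sqrt (x * N)" if "i < n" for i
  proof -
    have "cmod (env_signal f0 df (ss i) t) = sqrt (env_power f0 df (ss i) t)"
      by (simp add: env_power_def)
    also have "\<dots> \<le> sqrt (x * y ^ (2 * i) * real N)"
      using env_power_le_PEP[OF t, of f0 df "ss i"] pep[OF that] by simp
    also have "\<dots> = y ^ i * sqrt (x * N)"
      using y by (simp add: real_sqrt_mult power_mult power2_eq_square[symmetric] mult_ac)
    finally show ?thesis .
  qed
  have "cmod (env_signal f0 df (qam_seq N n ss) t)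
      = sqrt 2 / 2 * cmod (\<Sum>i<n. of_nat (2 ^ (n - 1 - i)) * env_signal f0 df (ss i) t)"
    by (simp only: env_signal_qam_seq[OF len] norm_mult norm_qam_scale)
  also have "\<dots> \<le> sqrt 2 / 2 * (\<Sum>i<n. cmod (of_nat (2 ^ (n - 1 - i)) * env_signal f0 df (ss i) t))"
    by (simp add: norm_sum)
  also have "\<dots> \<le> sqrt 2 / 2 * (\<Sum>i<n. 2 ^ (n - 1 - i) * (y ^ i * sqrt (x * N)))"
    by (intro mult_left_mono sum_mono) (auto simp: norm_mult norm_power intro!: mult_left_mono component)
  also have "\<dots> = R"
    unfolding R_def by (simp add: sum_distrib_left mult_ac)
  finally have "cmod (env_signal f0 df (qam_seq N n ss) t) \<le> R" .
  then have "env_power f0 df (qam_seq N n ss) t \<le> R\<^sup>2"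
    unfolding env_power_def by (simp add: power_mono)
  also have "R\<^sup>2 = 1/2 * x * N * (\<Sum>i<n. 2 ^ (n - 1 - i) * y ^ i)\<^sup>2"
    unfolding R_def using x by (simp add: power_mult_distrib power_divide)
  finally show "env_power f0 df (qam_seq N n ss) t \<le> 1/2 * x * N * (\<Sum>i<n. 2 ^ (n - 1 - i) * y ^ i)\<^sup>2" .
qed (use T in simp)

lemma sum_PiE_odd_in_coordinate:
  fixes f :: "('i \<Rightarrow> 'a) \<Rightarrow> 'b::real_vector"
  assumes i: "i \<in> I" and closed: "\<And>u. u \<in> S i \<Longrightarrow> \<sigma> u \<in> S i" and invol: "\<And>u. \<sigma> (\<sigma> u) = u"
    and odd: "\<And>ss. ss \<in> PiE I S \<Longrightarrow> f (ss(i := \<sigma> (ss i))) = - f ss"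
  shows "(\<Sum>ss\<in>PiE I S. f ss) = 0"
proof -
  define \<phi> where "\<phi> ss = ss(i := \<sigma> (ss i))" for ss :: "'i \<Rightarrow> 'a"
  have "\<phi> ss \<in> PiE I S" if "ss \<in> PiE I S" for ss
    using that i closed unfolding \<phi>_def by (auto simp: PiE_iff extensional_def)
  moreover have "\<phi> (\<phi> ss) = ss" for ss
    unfolding \<phi>_def by (simp add: invol)
  ultimately have "bij_betw \<phi> (PiE I S) (PiE I S)"
    by (intro bij_betw_byWitness[where f' = \<phi>]) auto
  then have "(\<Sum>ss\<in>PiE I S. f ss) = (\<Sum>ss\<in>PiE I S. f (\<phi> ss))"
    by (simp add: sum.reindex_bij_betw)
  also have "\<dots> = - (\<Sum>ss\<in>PiE I S. f ss)"
    by (simp add: \<phi>_def odd sum_negf)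
  finally show ?thesis
    by (metis add_eq_0_iff scaleR_2 scaleR_eq_0_iff zero_neq_numeral)
qed

lemma finite_qpsk_seqs: "finite {s. qpsk_seq N s}"
proof (rule finite_subset)
  show "{s. qpsk_seq N s} \<subseteq> {s. set s \<subseteq> {1, \<i>, -1, -\<i>} \<and> length s \<le> N}"
    by (auto simp: qpsk_seq_def)
qed (simp add: finite_lists_length_le)

lemma norm_qpsk_seq_nth: "qpsk_seq N s \<Longrightarrow> k < N \<Longrightarrow> cmod (s ! k) = 1"
  unfolding qpsk_seq_def by (auto dest!: nth_mem)

lemma sum_PiE_norm_weighted_sum_sq:
  fixes w :: "nat \<Rightarrow> real"
  assumes qpsk: "\<And>i s. i < n \<Longrightarrow> s \<in> S i \<Longrightarrow> qpsk_seq N s"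
    and neg: "\<And>i s. i < n \<Longrightarrow> s \<in> S i \<Longrightarrow> rot_seq 2 s \<in> S i"
    and k: "k < N"
  shows "(\<Sum>ss\<in>PiE {..<n} S. (cmod (\<Sum>i<n. of_real (w i) * ss i ! k))\<^sup>2)
       = card (PiE {..<n} S) * (\<Sum>i<n. (w i)\<^sup>2)"
proof -
  let ?P = "PiE {..<n} S"
  have entry: "(\<Sum>ss\<in>?P. ss i ! k * cnj (ss i' ! k)) = (if i = i' then of_nat (card ?P) else 0)"
    if "i < n" for i i'
  proof (cases "i = i'")
    case True
    have "ss i ! k * cnj (ss i ! k) = 1" if "ss \<in> ?P" for ss
      using norm_qpsk_seq_nth[OF qpsk k, of i "ss i"] \<open>i < n\<close> that
      by (simp add: complex_norm_square[symmetric] PiE_iff)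
    then show ?thesis using True by simp
  next
    case False
    have "(\<Sum>ss\<in>?P. ss i ! k * cnj (ss i' ! k)) = 0"
    proof (rule sum_PiE_odd_in_coordinate[where \<sigma> = "map uminus"])
      show "\<And>u. u \<in> S i \<Longrightarrow> map uminus u \<in> S i"
        using neg \<open>i < n\<close> by (simp add: rot_seq_def)
      fix ss assume "ss \<in> ?P"
      then have "length (ss i) = N" using qpsk \<open>i < n\<close> by (auto simp: PiE_iff qpsk_seq_def)
      then show "(ss(i := map uminus (ss i))) i ! k * cnj ((ss(i := map uminus (ss i))) i' ! k)
          = - (ss i ! k * cnj (ss i' ! k))"
        using False k by simp
    qed (use \<open>i < n\<close> in auto)
    then show ?thesis using False by simp
  qed
  have "complex_of_real (\<Sum>ss\<in>?P. (cmod (\<Sum>i<n. of_real (w i) * ss i ! k))\<^sup>2)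
      = (\<Sum>ss\<in>?P. \<Sum>i<n. \<Sum>i'<n. of_real (w i * w i') * (ss i ! k * cnj (ss i' ! k)))"
    unfolding of_real_sum complex_norm_square cnj_sum complex_cnj_mult sum_product
    by (simp add: mult_ac)
  also have "\<dots> = (\<Sum>i<n. \<Sum>i'<n. of_real (w i * w i') * (\<Sum>ss\<in>?P. ss i ! k * cnj (ss i' ! k)))"
    by (simp add: sum_distrib_left sum.swap[of _ ?P])
  also have "\<dots> = of_real (card ?P * (\<Sum>i<n. (w i)\<^sup>2))"
    by (simp add: entry if_distrib sum_distrib_left power2_eq_square mult_ac cong: if_cong)
  finally show ?thesis by (simp only: of_real_eq_iff)
qed

lemma P_av_qam_eq:
  assumes T: "T > 0" and Tdf: "\<exists>m::nat. m > 0 \<and> T * df = real m"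
    and S_ne: "\<And>i. i < n \<Longrightarrow> S i \<noteq> {}"
    and qpsk: "\<And>i s. i < n \<Longrightarrow> s \<in> S i \<Longrightarrow> qpsk_seq N s"
    and neg: "\<And>i s. i < n \<Longrightarrow> s \<in> S i \<Longrightarrow> rot_seq 2 s \<in> S i"
  shows "P_av T f0 df N n S = real N / 2 * (\<Sum>i<n. (2 ^ (n - 1 - i))\<^sup>2)"
proof -
  obtain m :: nat where m: "m > 0" "T * df = real m" using Tdf by blast
  let ?P = "PiE {..<n} S"
  let ?W = "\<Sum>i<n. ((2::real) ^ (n - 1 - i))\<^sup>2"
  have norm_qam: "(cmod (qam_seq N n ss ! k))\<^sup>2
      = 1/2 * (cmod (\<Sum>i<n. of_real (2 ^ (n - 1 - i)) * ss i ! k))\<^sup>2" if "k < N" for ss k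
    using that by (simp add: nth_qam_seq norm_mult norm_qam_scale power_mult_distrib power_divide)
  have energy: "1 / T * integral {0..T} (env_power f0 df (qam_seq N n ss))
      = (\<Sum>k<N. 1/2 * (cmod (\<Sum>i<n. of_real (2 ^ (n - 1 - i)) * ss i ! k))\<^sup>2)" for ss
    using T by (simp add: integral_env_power[OF T m(2,1)] norm_qam)
  have "(\<Sum>ss\<in>?P. 1 / T * integral {0..T} (env_power f0 df (qam_seq N n ss)))
      = (\<Sum>k<N. \<Sum>ss\<in>?P. 1/2 * (cmod (\<Sum>i<n. of_real (2 ^ (n - 1 - i)) * ss i ! k))\<^sup>2)"
    unfolding energy by (rule sum.swap)
  also have "\<dots> = (\<Sum>k<N. 1/2 * (real (card ?P) * ?W))"
    by (intro sum.cong refl, subst sum_distrib_left[symmetric],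
        subst sum_PiE_norm_weighted_sum_sq[OF qpsk neg]) auto
  also have "\<dots> = real (card ?P) * (real N / 2 * ?W)"
    by simp
  finally have "(\<Sum>ss\<in>?P. 1 / T * integral {0..T} (env_power f0 df (qam_seq N n ss)))
      = real (card ?P) * (real N / 2 * ?W)" .
  moreover have "card ?P = (\<Prod>i<n. card (S i))" by (simp add: card_PiE)
  moreover have "(\<Prod>i<n. card (S i)) > 0"
  proof (rule prod_pos)
    fix i assume "i \<in> {..<n}"
    then show "card (S i) > 0"
      using finite_subset[OF _ finite_qpsk_seqs] qpsk S_ne by (auto simp: card_gt_0_iff)
  qed
  ultimately show ?thesis
    unfolding P_av_def by simp
qed

lemma qam_set_eq_image_PiE: "qam_set N n S = qam_seq N n ` PiE {..<n} S"
proof (intro equalityI subsetI)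
  fix a assume "a \<in> qam_set N n S"
  then obtain ss where ss: "\<forall>i<n. ss i \<in> S i" and a: "a = qam_seq N n ss"
    unfolding qam_set_def by blast
  have "qam_seq N n ss = qam_seq N n (restrict ss {..<n})"
    unfolding qam_seq_def by (intro map_cong refl arg_cong2[where f = "(*)"] sum.cong) auto
  moreover have "restrict ss {..<n} \<in> PiE {..<n} S"
    using ss by simp
  ultimately show "a \<in> qam_seq N n ` PiE {..<n} S"
    unfolding a by (rule image_eqI)
next
  fix a assume "a \<in> qam_seq N n ` PiE {..<n} S"
  then obtain ss where "ss \<in> PiE {..<n} S" and "a = qam_seq N n ss" by blast
  then show "a \<in> qam_set N n S"
    unfolding qam_set_def by (blast dest: PiE_mem)
qed

lemma sum_pow2_pow_eq_geometric:
  fixes y :: real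
  assumes "n \<ge> 1" and "y \<noteq> 2"
  shows "(\<Sum>i<n. 2 ^ (n - 1 - i) * y ^ i) = 2 ^ (n - 1) * ((1 - (y / 2) ^ n) / (1 - y / 2))"
proof -
  have "2 ^ (n - 1 - i) * y ^ i = 2 ^ (n - 1) * (y / 2) ^ i" if "i < n" for i
  proof -
    have "(2::real) ^ (n - 1) = 2 ^ (n - 1 - i) * 2 ^ i"
      using that by (simp add: power_add[symmetric])
    then show ?thesis by (simp add: power_divide)
  qed
  then have "(\<Sum>i<n. 2 ^ (n - 1 - i) * y ^ i) = 2 ^ (n - 1) * (\<Sum>i<n. (y / 2) ^ i)"
    by (simp add: sum_distrib_left)
  then show ?thesis using assms(2) by (simp add: sum_gp_strict)
qed

lemma sum_pow2_sq_eq: "(\<Sum>i<n. ((2::real) ^ (n - 1 - i))\<^sup>2) = (4 ^ n - 1) / 3"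
proof -
  have "(\<Sum>i<n. ((2::real) ^ (n - 1 - i))\<^sup>2) = (\<Sum>i<n. 4 ^ (n - Suc i))"
    by (simp add: power_mult[symmetric] mult.commute power_mult)
  also have "\<dots> = (\<Sum>i<n. 4 ^ i)" by (rule sum.nat_diff_reindex)
  finally show ?thesis by (simp add: sum_gp_strict field_simps)
qed

lemma Max_PEP_qam_set_le:
  fixes x y :: real
  assumes T: "T \<ge> 0" and x: "x \<ge> 0" and y: "y \<ge> 0"
    and S_ne: "\<And>i. i < n \<Longrightarrow> S i \<noteq> {}"
    and qpsk: "\<And>i s. i < n \<Longrightarrow> s \<in> S i \<Longrightarrow> qpsk_seq N s"
    and pep: "\<And>i s. i < n \<Longrightarrow> s \<in> S i \<Longrightarrow> PEP T f0 df s \<le> x * y ^ (2 * i) * real N"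
  shows "Max (PEP T f0 df ` qam_set N n S) \<le> 1/2 * x * N * (\<Sum>i<n. 2 ^ (n - 1 - i) * y ^ i)\<^sup>2"
proof -
  have "finite (PiE {..<n} S)" "PiE {..<n} S \<noteq> {}"
    using finite_subset[OF _ finite_qpsk_seqs] qpsk S_ne
    by (auto intro!: finite_PiE simp: PiE_eq_empty_iff)
  moreover have "PEP T f0 df (qam_seq N n ss) \<le> 1/2 * x * N * (\<Sum>i<n. 2 ^ (n - 1 - i) * y ^ i)\<^sup>2"
    if "ss \<in> PiE {..<n} S" for ss
  proof -
    have "ss i \<in> S i" if "i < n" for i
      using \<open>ss \<in> PiE {..<n} S\<close> that by auto
    then show ?thesis
      using T x y pep qpsk by (intro PEP_qam_seq_le) (auto simp: qpsk_seq_def)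
  qed
  ultimately show ?thesis
    unfolding qam_set_eq_image_PiE image_image by (intro Max.boundedI) auto
qed

lemma qam_peak_to_mean_ratio_eq:
  fixes x y :: real
  assumes n: "n \<ge> 1" and y: "y \<noteq> 2" and N: "N > 0"
  shows "1/2 * x * N * (\<Sum>i<n. 2 ^ (n - 1 - i) * y ^ i)\<^sup>2 / (real N / 2 * ((4 ^ n - 1) / 3))
       = 3 / 4 * (4 ^ n / (4 ^ n - 1)) * ((1 - (y / 2) ^ n) / (1 - y / 2))\<^sup>2 * x"
proof -
  define G where "G = (1 - (y / 2) ^ n) / (1 - y / 2)"
  have "((2::real) ^ (n - 1))\<^sup>2 = 4 ^ n / 4"
    using n by (cases n) (simp_all add: power2_eq_square power_mult_distrib[symmetric])
  moreover have "(4::real) ^ n > 1" using n by simp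
  ultimately show ?thesis
    unfolding sum_pow2_pow_eq_geometric[OF n y] G_def[symmetric] using N by (simp add: field_simps)
qed

theorem theorem1:
  fixes T f0 df x y :: real and N n :: nat and S :: "nat \<Rightarrow> complex list set"
  assumes T_pos: "T > 0"
    and Tdf: "\<exists>m::nat. m > 0 \<and> T * df = real m"
    and N_ge: "N \<ge> 1" and n_ge: "n \<ge> 1"
    and x_gt: "x > 1" and y_ge: "1 \<le> y" and y_lt: "y < 2"
    and S_ne: "\<And>i. i < n \<Longrightarrow> S i \<noteq> {}"
    and S_qpsk: "\<And>i s. i < n \<Longrightarrow> s \<in> S i \<Longrightarrow> qpsk_seq N s"
    and S_pep: "\<And>i s. i < n \<Longrightarrow> s \<in> S i \<Longrightarrow> PEP T f0 df s \<le> x * y ^ (2 * i) * real N"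
    and S_rot: "\<And>i s m. i < n \<Longrightarrow> s \<in> S i \<Longrightarrow> m < 4 \<Longrightarrow> rot_seq m s \<in> S i"
  shows "PMEPR T f0 df N n S
          \<le> 3 / 4 * (2 ^ (2 * n) / (2 ^ (2 * n) - 1))
              * ((1 - (y / 2) ^ n) / (1 - y / 2))\<^sup>2 * x"
proof -
  have S_neg: "\<And>i s. i < n \<Longrightarrow> s \<in> S i \<Longrightarrow> rot_seq 2 s \<in> S i"
    using S_rot by simp
  have P_av: "P_av T f0 df N n S = real N / 2 * ((4 ^ n - 1) / 3)"
    unfolding sum_pow2_sq_eq[symmetric] using T_pos Tdf S_ne S_qpsk S_neg by (rule P_av_qam_eq)
  have "Max (PEP T f0 df ` qam_set N n S) \<le> 1/2 * x * N * (\<Sum>i<n. 2 ^ (n - 1 - i) * y ^ i)\<^sup>2"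
    using T_pos x_gt y_ge S_ne S_qpsk S_pep by (intro Max_PEP_qam_set_le) auto
  moreover have "real N / 2 * ((4 ^ n - 1) / 3) \<ge> 0"
    by simp
  ultimately have "PMEPR T f0 df N n S
      \<le> 1/2 * x * N * (\<Sum>i<n. 2 ^ (n - 1 - i) * y ^ i)\<^sup>2 / (real N / 2 * ((4 ^ n - 1) / 3))"
    unfolding PMEPR_def P_av by (rule divide_right_mono)
  also have "\<dots> = 3 / 4 * (4 ^ n / (4 ^ n - 1)) * ((1 - (y / 2) ^ n) / (1 - y / 2))\<^sup>2 * x"
    using n_ge y_lt N_ge by (intro qam_peak_to_mean_ratio_eq) auto
  finally show ?thesis
    by (simp add: power_mult)
qed

end
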